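(* For every integer $k\ge2$ and every integer $x\ge2$, $\mathrm{ex}(2x,2k)\le 6\,\mathrm{ex}(x,2k)$.
   Context: The girth of a graph is the length of its shortest cycle ($\infty$ if none). $\mathrm{ex}(n,2k)$ is the maximum number of edges of a simple graph on $n$ vertices with girth at least $2k$. *)

theory Defs
  imports Main "HOL-Library.Extended_Nat"
begin

definition simple_graph_on :: "nat \<Rightarrow> nat set set \<Rightarrow> bool" where
  "simple_graph_on n E \<longleftrightarrow>
     E \<subseteq> {e. \<exists>u v. e = {u, v} \<and> u \<noteq> v \<and> u < n \<and> v < n}"

definition has_cycle_of_length :: "nat set set \<Rightarrow> nat \<Rightarrow> bool" where
  "has_cycle_of_length E l \<longleftrightarrow>
     3 \<le> l \<and> (\<exists>vs :: nat list. length vs = l \<and> distinct vs \<and>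
        (\<forall>i<l. {vs ! i, vs ! ((i + 1) mod l)} \<in> E))"

definition girth :: "nat set set \<Rightarrow> enat" where
  "girth E = Inf {enat l | l. has_cycle_of_length E l}"

definition ex :: "nat \<Rightarrow> nat \<Rightarrow> nat" where
  "ex n g = Max {card E | E. simple_graph_on n E \<and> enat g \<le> girth E}"

end

theory Submission
  imports Defs
begin

text \<open>If the pairs of vertices of \<open>{0..<N}\<close> are covered by \<open>m\<close> sets of at most \<open>n\<close> vertices,
  every edge of a graph on \<open>{0..<N}\<close> lies in the subgraph induced by one of them; each such
  subgraph is, after relabelling, a graph on \<open>n\<close> vertices of no smaller girth, so
  \<open>ex(N, g) \<le> m \<cdot> ex(n, g)\<close> for every \<open>g\<close>. For \<open>N = 2x\<close> six sets of size \<open>x\<close> suffice: split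
  the vertices into four blocks and take the unions of any two of them. For odd \<open>x\<close> the
  blocks cannot all have size \<open>x/2\<close>, and three leftover vertices are distributed among the
  six unions so that each lies in a union with every block and with each other.\<close>

lemma simple_graph_on_finite:
  assumes "simple_graph_on n E" shows "finite E"
proof -
  have "E \<subseteq> Pow {..<n}" using assms unfolding simple_graph_on_def by auto
  thus ?thesis by (rule finite_subset) simp
qed

lemma girth_empty: "girth {} = \<infinity>"
proof -
  have "{enat l | l. has_cycle_of_length {} l} = {}"
    unfolding has_cycle_of_length_def by force
  thus ?thesis unfolding girth_def by (simp add: top_enat_def)
qed

lemma girth_antimono:
  assumes "E \<subseteq> F" shows "girth F \<le> girth E"
  unfolding girth_def has_cycle_of_length_def
  by (rule Inf_superset_mono) (use assms in blast)

lemma has_cycle_of_length_image: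
  assumes inj: "inj_on f (\<Union>E)" and cyc: "has_cycle_of_length E l"
  shows "has_cycle_of_length (image f ` E) l"
proof -
  obtain vs where vs: "3 \<le> l" "length vs = l" "distinct vs"
    and edge: "\<And>i. i < l \<Longrightarrow> {vs ! i, vs ! ((i + 1) mod l)} \<in> E"
    using cyc unfolding has_cycle_of_length_def by blast
  have "set vs \<subseteq> \<Union>E"
  proof
    fix v assume "v \<in> set vs"
    then obtain i where "i < l" "v = vs ! i" using vs(2) by (auto simp: in_set_conv_nth)
    thus "v \<in> \<Union>E" using edge by blast
  qed
  hence "distinct (map f vs)" using vs(3) inj by (simp add: distinct_map inj_on_subset)
  moreover have "{map f vs ! i, map f vs ! ((i + 1) mod l)} \<in> image f ` E" if "i < l" for i
  proof -
    have "(i + 1) mod l < l" using vs(1) by simp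
    hence "{map f vs ! i, map f vs ! ((i + 1) mod l)} = f ` {vs ! i, vs ! ((i + 1) mod l)}"
      using that vs(2) by simp
    thus ?thesis using edge[OF that] by blast
  qed
  ultimately show ?thesis using vs(1,2) unfolding has_cycle_of_length_def
    by (intro conjI exI[of _ "map f vs"]) auto
qed

lemma girth_image:
  assumes inj: "inj_on f (\<Union>E)" shows "girth (image f ` E) = girth E"
proof -
  define h where "h = inv_into (\<Union>E) f"
  have "image h ` image f ` E = E"
  proof -
    have "h ` f ` e = e" if "e \<in> E" for e
      unfolding h_def using inj that by (intro inv_into_image_cancel) auto
    thus ?thesis by (simp add: image_image)
  qed
  moreover have "inj_on h (\<Union>(image f ` E))" unfolding h_def by (rule inj_on_inv_into) auto
  ultimately have "has_cycle_of_length (image f ` E) l \<Longrightarrow> has_cycle_of_length E l" for l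
    using has_cycle_of_length_image[of h "image f ` E" l] by simp
  hence "{enat l | l. has_cycle_of_length (image f ` E) l} = {enat l | l. has_cycle_of_length E l}"
    using has_cycle_of_length_image[OF inj] by blast
  thus ?thesis unfolding girth_def by simp
qed

lemma ex_candidates_finite: "finite {card E | E. simple_graph_on n E \<and> enat g \<le> girth E}"
proof -
  have "{E. simple_graph_on n E} \<subseteq> Pow (Pow {..<n})"
    unfolding simple_graph_on_def by auto
  hence "finite {E. simple_graph_on n E}" by (rule finite_subset) simp
  thus ?thesis by (rule finite_subset[OF _ finite_imageI, rotated]) auto
qed

lemma card_le_ex:
  assumes "simple_graph_on n E" "enat g \<le> girth E"
  shows "card E \<le> ex n g"
  unfolding ex_def using assms ex_candidates_finite by (intro Max_ge) auto

lemma ex_attained: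
  obtains E where "simple_graph_on n E" "enat g \<le> girth E" "card E = ex n g"
proof -
  have "simple_graph_on n {}" "enat g \<le> girth {}"
    by (simp_all add: simple_graph_on_def girth_empty)
  hence "{card E | E. simple_graph_on n E \<and> enat g \<le> girth E} \<noteq> {}" by blast
  from Max_in[OF ex_candidates_finite this] show ?thesis
    using that unfolding ex_def by auto
qed

lemma card_induced_le_ex:
  assumes G: "simple_graph_on N E" and girth: "enat g \<le> girth E"
    and S: "finite S" "card S \<le> n"
  shows "card {e\<in>E. e \<subseteq> S} \<le> ex n g"
proof -
  define ES where "ES = {e\<in>E. e \<subseteq> S}"
  obtain f where f: "bij_betw f S {0..<card S}" using ex_bij_betw_finite_nat[OF S(1)] by blast
  hence inj: "inj_on f S" and fS: "f ` S = {0..<card S}"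
    by (simp_all add: bij_betw_def)
  have "\<Union>ES \<subseteq> S" unfolding ES_def by blast
  hence inj_ES: "inj_on f (\<Union>ES)" using inj by (rule inj_on_subset[rotated])
  have "simple_graph_on n (image f ` ES)"
    unfolding simple_graph_on_def
  proof
    fix e' assume "e' \<in> image f ` ES"
    then obtain e where e: "e \<in> E" "e \<subseteq> S" "e' = f ` e" unfolding ES_def by blast
    then obtain u v where uv: "e = {u, v}" "u \<noteq> v" using G unfolding simple_graph_on_def by blast
    have "f u \<noteq> f v" using inj uv e(2) by (auto simp: inj_on_def)
    moreover have "f u < n" "f v < n"
      using uv e(2) fS S(2) by (auto dest!: equalityD1 intro: order.strict_trans2)
    ultimately show "e' \<in> {e. \<exists>u v. e = {u, v} \<and> u \<noteq> v \<and> u < n \<and> v < n}"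
      using e(3) uv(1) by auto
  qed
  moreover have "enat g \<le> girth (image f ` ES)"
  proof -
    have "girth E \<le> girth ES" unfolding ES_def by (rule girth_antimono) blast
    thus ?thesis using girth girth_image[OF inj_ES] by simp
  qed
  ultimately have "card (image f ` ES) \<le> ex n g" by (rule card_le_ex)
  moreover have "inj_on (image f) ES"
    using inj_on_image_Pow[OF inj] by (rule inj_on_subset) (auto simp: ES_def)
  ultimately show ?thesis by (simp add: card_image ES_def)
qed

definition pair_cover :: "nat \<Rightarrow> nat \<Rightarrow> nat set set \<Rightarrow> bool" where
  "pair_cover N n \<S> \<longleftrightarrow> finite \<S> \<and> (\<forall>S\<in>\<S>. finite S \<and> card S \<le> n) \<and>
     (\<forall>u<N. \<forall>v<N. \<exists>S\<in>\<S>. u \<in> S \<and> v \<in> S)"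

lemma ex_le_card_pair_cover:
  assumes cover: "pair_cover N n \<S>"
  shows "ex N g \<le> card \<S> * ex n g"
proof -
  obtain E where G: "simple_graph_on N E" and girth: "enat g \<le> girth E" and E: "card E = ex N g"
    by (rule ex_attained)
  have "E \<subseteq> (\<Union>S\<in>\<S>. {e\<in>E. e \<subseteq> S})"
  proof
    fix e assume "e \<in> E"
    moreover from this obtain u v where "e = {u, v}" "u < N" "v < N"
      using G unfolding simple_graph_on_def by blast
    ultimately show "e \<in> (\<Union>S\<in>\<S>. {e\<in>E. e \<subseteq> S})"
      using cover unfolding pair_cover_def by blast
  qed
  hence "card E \<le> card (\<Union>S\<in>\<S>. {e\<in>E. e \<subseteq> S})"
    using simple_graph_on_finite[OF G] by (intro card_mono) (auto intro: finite_subset)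
  also have "\<dots> \<le> (\<Sum>S\<in>\<S>. card {e\<in>E. e \<subseteq> S})"
    using cover unfolding pair_cover_def by (intro card_UN_le) blast
  also have "\<dots> \<le> card \<S> * ex n g"
    using cover card_induced_le_ex[OF G girth] unfolding pair_cover_def
    by (intro sum_bounded_above[of _ _ "ex n g", simplified]) blast
  finally show ?thesis using E by simp
qed

lemma card_Un3_le: "card (A \<union> B \<union> C) \<le> card A + card B + card C"
  by (meson add_mono card_Un_le le_refl order_trans)

lemma pair_cover_even:
  "pair_cover (4*a) (2*a) {{..<2*a}, {2*a..<4*a}, {..<a} \<union> {2*a..<3*a},
     {a..<2*a} \<union> {3*a..<4*a}, {..<a} \<union> {3*a..<4*a}, {a..<3*a}}"
proof -
  have block: "u < a \<or> u \<in> {a..<2*a} \<or> u \<in> {2*a..<3*a} \<or> u \<in> {3*a..<4*a}" if "u < 4*a" for u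
    using that by auto
  have "card ({..<a} \<union> {2*a..<3*a}) \<le> 2*a" "card ({a..<2*a} \<union> {3*a..<4*a}) \<le> 2*a"
    "card ({..<a} \<union> {3*a..<4*a}) \<le> 2*a"
    by (rule card_Un_le[THEN order_trans], simp)+
  moreover have "\<exists>S\<in>{{..<2*a}, {2*a..<4*a}, {..<a} \<union> {2*a..<3*a},
     {a..<2*a} \<union> {3*a..<4*a}, {..<a} \<union> {3*a..<4*a}, {a..<3*a}}. u \<in> S \<and> v \<in> S"
    if "u < 4*a" "v < 4*a" for u v
    using block[OF that(1)] block[OF that(2)] by (elim disjE) auto
  ultimately show ?thesis unfolding pair_cover_def by auto
qed

text \<open>Blocks \<open>[0,a)\<close>, \<open>[a,2a)\<close>, \<open>[2a,3a)\<close>, \<open>[3a,4a-1)\<close>; the leftover vertices \<open>4a-1\<close>,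
  \<open>4a\<close>, \<open>4a+1\<close> meet pairwise in the unions of blocks 1 and 4, 3 and 4, 2 and 4.\<close>
lemma pair_cover_odd:
  assumes "a \<ge> 1"
  shows "pair_cover (4*a+2) (2*a+1) {{..<2*a} \<union> {4*a-1}, {2*a..4*a},
     {..<a} \<union> {2*a..<3*a} \<union> {4*a}, {a..<2*a} \<union> {3*a..<4*a-1} \<union> {4*a, 4*a+1},
     {..<a} \<union> {3*a..<4*a} \<union> {4*a+1}, {a..<3*a} \<union> {4*a+1}}"
proof -
  have block: "u < a \<or> u \<in> {a..<2*a} \<or> u \<in> {2*a..<3*a} \<or> u \<in> {3*a..<4*a-1} \<or>
      u = 4*a-1 \<or> u = 4*a \<or> u = 4*a+1" if "u < 4*a+2" for u
    using that assms by auto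
  have "card ({..<2*a} \<union> {4*a-1}) \<le> 2*a+1" "card ({a..<3*a} \<union> {4*a+1}) \<le> 2*a+1"
    by (rule card_Un_le[THEN order_trans], simp)+
  moreover have "card ({..<a} \<union> {2*a..<3*a} \<union> {4*a}) \<le> 2*a+1"
    "card ({a..<2*a} \<union> {3*a..<4*a-1} \<union> {4*a, 4*a+1}) \<le> 2*a+1"
    "card ({..<a} \<union> {3*a..<4*a} \<union> {4*a+1}) \<le> 2*a+1"
    by (rule card_Un3_le[THEN order_trans], use assms in simp)+
  moreover have "\<exists>S\<in>{{..<2*a} \<union> {4*a-1}, {2*a..4*a},
     {..<a} \<union> {2*a..<3*a} \<union> {4*a}, {a..<2*a} \<union> {3*a..<4*a-1} \<union> {4*a, 4*a+1},
     {..<a} \<union> {3*a..<4*a} \<union> {4*a+1}, {a..<3*a} \<union> {4*a+1}}. u \<in> S \<and> v \<in> S"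
    if "u < 4*a+2" "v < 4*a+2" for u v
    using block[OF that(1)] block[OF that(2)] assms by (elim disjE) auto
  ultimately show ?thesis unfolding pair_cover_def by auto
qed

lemma pair_cover_double:
  assumes "x \<ge> 2"
  obtains \<S> where "pair_cover (2*x) x \<S>" "card \<S> \<le> 6"
proof -
  have six: "card {A, B, C, D, E, F} \<le> 6" for A B C D E F :: "nat set"
    using card_length[of "[A, B, C, D, E, F]"] by simp
  define a where "a = x div 2"
  consider "x = 2*a" | "x = 2*a + 1" "a \<ge> 1" using assms unfolding a_def by linarith
  thus ?thesis
  proof cases
    case 1
    with that show ?thesis using pair_cover_even[of a] six by auto
  next
    case 2
    with that show ?thesis using pair_cover_odd[of a] six by auto
  qed
qed

theorem lemma5p2:
  fixes k x :: nat
  assumes "k \<ge> 2" and "x \<ge> 2"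
  shows "ex (2 * x) (2 * k) \<le> 6 * ex x (2 * k)"
proof -
  obtain \<S> where cover: "pair_cover (2*x) x \<S>" and size: "card \<S> \<le> 6"
    using pair_cover_double[OF assms(2)] .
  have "ex (2*x) (2*k) \<le> card \<S> * ex x (2*k)" using cover by (rule ex_le_card_pair_cover)
  also have "\<dots> \<le> 6 * ex x (2*k)" using size by simp
  finally show ?thesis .
qed

end
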